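(* Let $k\ge 2$ be an integer and let $G=\Theta(2,2,2k)$. Then $P_\ell(G,m)=P(G,m)$ for every integer $m\ge 3$.
   Context: $\Theta(l_1,l_2,l_3)$ denotes the graph consisting of two end vertices joined by three internally disjoint paths of lengths $l_1,l_2,l_3$. All graphs are finite and simple. For a list assignment $L$ (assigning a set $L(v)$ of colors to each vertex $v$), $P(G,L)$ is the number of proper colorings $f$ of $G$ with $f(v)\in L(v)$ for all $v$; an $m$-assignment has $|L(v)|=m$ for all $v$. $P(G,m)$ is the chromatic polynomial of $G$, and the list color function $P_\ell(G,m)$ is the minimum of $P(G,L)$ over all $m$-assignments $L$ for $G$. *)

theory Defs
  imports Main "HOL-Library.FuncSet"
begin

definition simple_graph :: "'a set \<Rightarrow> 'a set set \<Rightarrow> bool" where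
  "simple_graph V E \<longleftrightarrow> finite V \<and> (\<forall>e\<in>E. e \<subseteq> V \<and> card e = 2)"

definition list_colorings :: "'a set \<Rightarrow> 'a set set \<Rightarrow> ('a \<Rightarrow> nat set) \<Rightarrow> ('a \<Rightarrow> nat) set" where
  "list_colorings V E L =
     {f \<in> extensional V. (\<forall>v\<in>V. f v \<in> L v) \<and> (\<forall>u v. {u, v} \<in> E \<longrightarrow> f u \<noteq> f v)}"

definition P_list :: "'a set \<Rightarrow> 'a set set \<Rightarrow> ('a \<Rightarrow> nat set) \<Rightarrow> nat" where
  "P_list V E L = card (list_colorings V E L)"

definition chrom :: "'a set \<Rightarrow> 'a set set \<Rightarrow> nat \<Rightarrow> nat" where
  "chrom V E m = P_list V E (\<lambda>_. {1..m})"

definition m_assignment :: "'a set \<Rightarrow> nat \<Rightarrow> ('a \<Rightarrow> nat set) \<Rightarrow> bool" where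
  "m_assignment V m L \<longleftrightarrow> (\<forall>v\<in>V. finite (L v) \<and> card (L v) = m)"

definition list_color_fun :: "'a set \<Rightarrow> 'a set set \<Rightarrow> nat \<Rightarrow> nat" where
  "list_color_fun V E m = Min {P_list V E L | L. m_assignment V m L}"

(* Theta(l1,l2,l3): end vertices (0,0) and (0,1); path i (i = 1,2,3) of length l_i
   has internal vertices (i,1),...,(i,l_i - 1). *)
definition theta_path_vertex :: "nat \<Rightarrow> nat \<Rightarrow> nat \<Rightarrow> nat \<times> nat" where
  "theta_path_vertex l i j = (if j = 0 then (0,0) else if j = l then (0,1) else (i,j))"

definition theta_V :: "nat \<Rightarrow> nat \<Rightarrow> nat \<Rightarrow> (nat \<times> nat) set" where
  "theta_V l1 l2 l3 = {(0,0),(0,1)} \<union> {(1,j) | j. 1 \<le> j \<and> j < l1}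
      \<union> {(2,j) | j. 1 \<le> j \<and> j < l2} \<union> {(3,j) | j. 1 \<le> j \<and> j < l3}"

definition theta_E :: "nat \<Rightarrow> nat \<Rightarrow> nat \<Rightarrow> (nat \<times> nat) set set" where
  "theta_E l1 l2 l3 =
     (\<Union>(i,l)\<in>{(1,l1),(2,l2),(3,l3)}.
        {{theta_path_vertex l i j, theta_path_vertex l i (j+1)} | j. j < l})"

end

theory Submission
  imports Defs
begin

(* Let u = (0,0) and w = (0,1) be the branch vertices, x = (1,1) and y = (2,1) the middle
   vertices of the two short paths, and u = v_0, ..., v_n = w the long path. Conditioning on
   the colours a, b of u and w,
     P(G,L) = sum_{a,b} |L(x) - {a,b}| |L(y) - {a,b}| N(a,b),
   where N(a,b) counts the L-colourings of the long path with end colours a and b. For constant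
   lists N(a,b) = d_n + (-1)^n [a = b], where d_n counts the walks of length n between two
   distinct vertices of K_m. For arbitrary m-lists, induction along the path yields a bijection
   t from L(v_0) onto L(v_n) with N(a,b) >= d_n + (-1)^n [b = t a] which moves at most as many
   colours as the lists lose along the path, while every lost colour raises the total sum of
   N(a,b) by at least (m-1)^(n-1). For even n, weighting these two estimates by
   |L(x) - {a,b}| |L(y) - {a,b}|, which is at least (m-2)^2 and at least (m-1)^2 on the
   diagonal, and bounding the total weight by the same argument for the 4-cycle u x w y,
   gives P(G,L) >= P(G,m). *)

section \<open>List colourings of paths\<close>

(* walks_ne m j is the number of walks of length j between two fixed distinct vertices of K_m. *)
fun walks_ne :: "nat \<Rightarrow> nat \<Rightarrow> int" where
  "walks_ne m 0 = 0"
| "walks_ne m (Suc j) = (int m - 1) * walks_ne m j + (-1) ^ j"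

lemma walks_ne_closed_form: "int m * walks_ne m j + (-1) ^ j = (int m - 1) ^ j"
  by (induction j) (auto simp: algebra_simps)

lemma walks_ne_nonneg:
  assumes "2 \<le> m"
  shows "0 \<le> walks_ne m j"
proof -
  have "1 \<le> (int m - 1) ^ j" using assms by simp
  moreover have "(-1 :: int) ^ j \<le> 1" by (cases "even j") auto
  ultimately have "0 \<le> int m * walks_ne m j" using walks_ne_closed_form[of m j] by linarith
  then show ?thesis using assms by (simp add: zero_le_mult_iff)
qed

lemma walks_ne_pos_odd:
  assumes "2 \<le> m" and "odd j"
  shows "1 \<le> walks_ne m j"
proof -
  have "1 \<le> (int m - 1) ^ j" using assms by simp
  then have "0 < int m * walks_ne m j" using walks_ne_closed_form[of m j] assms(2) by simp
  then show ?thesis using assms by (simp add: zero_less_mult_iff)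
qed

fun path_count :: "(nat \<Rightarrow> 'c set) \<Rightarrow> nat \<Rightarrow> 'c \<Rightarrow> 'c \<Rightarrow> nat" where
  "path_count Lp 0 a b = (if a = b \<and> a \<in> Lp 0 then 1 else 0)"
| "path_count Lp (Suc j) a b =
     (if b \<in> Lp (Suc j) then (\<Sum>c\<in>Lp j - {b}. path_count Lp j a c) else 0)"

definition path_colorings :: "(nat \<Rightarrow> 'c set) \<Rightarrow> nat \<Rightarrow> 'c \<Rightarrow> 'c \<Rightarrow> (nat \<Rightarrow> 'c) set" where
  "path_colorings Lp j a b =
     {h \<in> extensional {0..j}. (\<forall>i\<le>j. h i \<in> Lp i) \<and> (\<forall>i<j. h i \<noteq> h (Suc i)) \<and> h 0 = a \<and> h j = b}"

lemma finite_path_colorings: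
  assumes "\<And>i. i \<le> j \<Longrightarrow> finite (Lp i)"
  shows "finite (path_colorings Lp j a b)"
proof (rule finite_subset)
  show "path_colorings Lp j a b \<subseteq> PiE {0..j} Lp" by (auto simp: path_colorings_def PiE_def)
  show "finite (PiE {0..j} Lp)" using assms by (intro finite_PiE) auto
qed

lemma path_colorings_0:
  "path_colorings Lp 0 a b = (if a = b \<and> a \<in> Lp 0 then {(\<lambda>i\<in>{0}. a)} else {})"
  by (auto simp: path_colorings_def extensional_def)

lemma path_colorings_Suc:
  assumes "b \<in> Lp (Suc j)"
  shows "path_colorings Lp (Suc j) a b = (\<Union>c\<in>Lp j - {b}. (\<lambda>h. h(Suc j := b)) ` path_colorings Lp j a c)"
proof (intro equalityI subsetI)
  fix h assume h: "h \<in> path_colorings Lp (Suc j) a b"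
  then have "h(Suc j := undefined) \<in> path_colorings Lp j a (h j)" and "h j \<in> Lp j - {b}"
    by (auto simp: path_colorings_def extensional_def)
  moreover have "h = (h(Suc j := undefined))(Suc j := b)" using h by (auto simp: path_colorings_def)
  ultimately show "h \<in> (\<Union>c\<in>Lp j - {b}. (\<lambda>h. h(Suc j := b)) ` path_colorings Lp j a c)" by blast
next
  fix h assume "h \<in> (\<Union>c\<in>Lp j - {b}. (\<lambda>h. h(Suc j := b)) ` path_colorings Lp j a c)"
  with assms show "h \<in> path_colorings Lp (Suc j) a b"
    by (auto simp: path_colorings_def extensional_def less_Suc_eq le_Suc_eq)
qed

lemma card_path_colorings:
  assumes "\<And>i. i \<le> j \<Longrightarrow> finite (Lp i)"
  shows "card (path_colorings Lp j a b) = path_count Lp j a b"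
  using assms
proof (induction j arbitrary: b)
  case 0
  then show ?case by (auto simp: path_colorings_0)
next
  case (Suc j)
  show ?case
  proof (cases "b \<in> Lp (Suc j)")
    case False
    then have "path_colorings Lp (Suc j) a b = {}" by (auto simp: path_colorings_def)
    then show ?thesis using False by simp
  next
    case True
    let ?ext = "\<lambda>h. h(Suc j := b)"
    have inj: "inj_on ?ext (path_colorings Lp j a c)" for c
      by (rule inj_onI) (simp add: path_colorings_def extensional_def fun_eq_iff, metis Suc_n_not_le_n)
    have "card (path_colorings Lp (Suc j) a b) = (\<Sum>c\<in>Lp j - {b}. card (?ext ` path_colorings Lp j a c))"
      unfolding path_colorings_Suc[of b Lp j, OF True]
    proof (rule card_UN_disjoint)
      show "\<forall>c\<in>Lp j - {b}. finite (?ext ` path_colorings Lp j a c)"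
        using Suc.prems by (simp add: finite_path_colorings)
      show "\<forall>c\<in>Lp j - {b}. \<forall>c'\<in>Lp j - {b}. c \<noteq> c' \<longrightarrow>
          ?ext ` path_colorings Lp j a c \<inter> ?ext ` path_colorings Lp j a c' = {}"
        by (auto simp: path_colorings_def dest!: fun_cong[where x=j])
    qed (use Suc.prems in simp)
    also have "\<dots> = (\<Sum>c\<in>Lp j - {b}. path_count Lp j a c)"
      using Suc by (simp add: card_image[OF inj])
    finally show ?thesis using True by simp
  qed
qed

lemma m_assignment_atMost_Suc:
  "m_assignment {..Suc j} m Lp \<Longrightarrow> m_assignment {..j} m Lp"
  by (simp add: m_assignment_def)

lemma path_count_const:
  assumes "finite S" "card S = m" "a \<in> S" "b \<in> S"
  shows "int (path_count (\<lambda>_. S) j a b) = walks_ne m j + (-1) ^ j * (if a = b then 1 else 0)"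
  using assms(4)
proof (induction j arbitrary: b)
  case 0
  then show ?case using assms(3) by simp
next
  case (Suc j)
  have "m \<noteq> 0" using assms(1,2) Suc.prems by (metis card_0_eq empty_iff)
  then have "int (card (S - {b})) = int m - 1" using assms(1,2) Suc.prems by (simp add: of_nat_diff)
  moreover have "int (path_count (\<lambda>_. S) (Suc j) a b)
      = (\<Sum>c\<in>S - {b}. walks_ne m j + (-1) ^ j * (if a = c then 1 else 0))"
    using Suc by simp
  ultimately show ?case using assms(1,3) by (simp add: sum.distrib sum_distrib_left[symmetric])
qed

lemma path_count_two:
  assumes "a \<in> Lp 0" "b \<in> Lp 2" "finite (Lp 0)" "finite (Lp 1)"
  shows "path_count Lp 2 a b = card (Lp 1 - {a, b})"
proof -
  have "path_count Lp 1 a c = (if c \<in> Lp 1 - {a} then 1 else 0)" for c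
    using assms(1,3) by (simp add: sum.delta)
  moreover have "path_count Lp 2 a b = (\<Sum>c\<in>Lp 1 - {b}. path_count Lp 1 a c)"
    using assms(2) path_count.simps(2)[of Lp 1 a b] by (simp add: numeral_2_eq_2 del: path_count.simps)
  ultimately have "path_count Lp 2 a b = (\<Sum>c\<in>Lp 1 - {b}. if c \<in> Lp 1 - {a} then 1 else 0)"
    by (simp del: path_count.simps)
  also have "\<dots> = card {c \<in> Lp 1 - {b}. c \<in> Lp 1 - {a}}"
    using assms(4) by (simp add: sum.inter_filter[symmetric] cong: conj_cong)
  also have "{c \<in> Lp 1 - {b}. c \<in> Lp 1 - {a}} = Lp 1 - {a, b}" by auto
  finally show ?thesis .
qed

lemma sum_sum_Diff_singleton_swap:
  fixes h :: "'a \<Rightarrow> 'b::comm_semiring_1"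
  assumes "finite B" "finite C"
  shows "(\<Sum>b\<in>B. \<Sum>c\<in>C - {b}. h c) = (\<Sum>c\<in>C. of_nat (card (B - {c})) * h c)"
proof -
  have "(\<Sum>b\<in>B. \<Sum>c\<in>C - {b}. h c) = (\<Sum>b\<in>B. \<Sum>c\<in>{c\<in>C. b \<noteq> c}. h c)"
    by (intro sum.cong) auto
  also have "\<dots> = (\<Sum>c\<in>C. \<Sum>b\<in>{b\<in>B. b \<noteq> c}. h c)"
    using assms by (rule sum.swap_restrict)
  also have "\<dots> = (\<Sum>c\<in>C. of_nat (card (B - {c})) * h c)"
    by (intro sum.cong) (auto simp: set_diff_eq)
  finally show ?thesis .
qed

lemma path_count_column_sum_ge:
  assumes "m_assignment {..j} m Lp" "b \<in> Lp j"
  shows "(m - 1) ^ j \<le> (\<Sum>a\<in>Lp 0. path_count Lp j a b)"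
  using assms
proof (induction j arbitrary: b)
  case 0
  then show ?case by (simp add: m_assignment_def)
next
  case (Suc j)
  have Lj: "finite (Lp j)" "card (Lp j) = m" "finite (Lp 0)"
    using Suc.prems(1) by (auto simp: m_assignment_def)
  have "m - 1 \<le> card (Lp j - {b})"
    using Lj by (simp add: card_Diff_singleton_if)
  then have "(m - 1) ^ Suc j \<le> card (Lp j - {b}) * (m - 1) ^ j"
    by (simp add: mult_right_mono)
  also have "\<dots> \<le> (\<Sum>c\<in>Lp j - {b}. \<Sum>a\<in>Lp 0. path_count Lp j a c)"
    using sum_bounded_below[of "Lp j - {b}" "(m - 1) ^ j"] Suc.IH m_assignment_atMost_Suc[OF Suc.prems(1)]
    by auto
  also have "\<dots> = (\<Sum>a\<in>Lp 0. path_count Lp (Suc j) a b)"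
    using Suc.prems(2) by (simp add: sum.swap[of _ "Lp j - {b}"])
  finally show ?case .
qed

lemma sum_path_count_Suc:
  assumes "m_assignment {..Suc j} m Lp" "1 \<le> m"
  shows "(\<Sum>a\<in>Lp 0. \<Sum>b\<in>Lp (Suc j). path_count Lp (Suc j) a b)
       = (m - 1) * (\<Sum>a\<in>Lp 0. \<Sum>b\<in>Lp j. path_count Lp j a b)
         + (\<Sum>c\<in>Lp j - Lp (Suc j). \<Sum>a\<in>Lp 0. path_count Lp j a c)"
proof -
  have L: "finite (Lp j)" "finite (Lp (Suc j))" "card (Lp (Suc j)) = m" "finite (Lp 0)"
    using assms(1) by (auto simp: m_assignment_def)
  have card_eq: "card (Lp (Suc j) - {c}) = (m - 1) + (if c \<in> Lp j - Lp (Suc j) then 1 else 0)"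
    if "c \<in> Lp j" for c
    using L assms(2) that by (simp add: card_Diff_singleton_if)
  have "(\<Sum>a\<in>Lp 0. \<Sum>b\<in>Lp (Suc j). path_count Lp (Suc j) a b)
      = (\<Sum>a\<in>Lp 0. \<Sum>c\<in>Lp j. card (Lp (Suc j) - {c}) * path_count Lp j a c)"
    using L by (simp add: sum_sum_Diff_singleton_swap)
  also have "\<dots> = (\<Sum>a\<in>Lp 0. \<Sum>c\<in>Lp j. (m - 1) * path_count Lp j a c
                     + (if c \<in> Lp j - Lp (Suc j) then path_count Lp j a c else 0))"
    using card_eq by (intro sum.cong refl) (simp add: algebra_simps)
  also have "\<dots> = (m - 1) * (\<Sum>a\<in>Lp 0. \<Sum>b\<in>Lp j. path_count Lp j a b)
         + (\<Sum>a\<in>Lp 0. \<Sum>c\<in>Lp j - Lp (Suc j). path_count Lp j a c)"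
    using L by (simp add: sum.distrib sum_distrib_left sum.If_cases Compl_eq[symmetric] Diff_eq[symmetric])
  finally show ?thesis by (simp add: sum.swap[of _ "Lp 0"])
qed

definition list_changes :: "(nat \<Rightarrow> 'c set) \<Rightarrow> nat \<Rightarrow> nat" where
  "list_changes Lp j = (\<Sum>i<j. card (Lp i - Lp (Suc i)))"

lemma sum_path_count_ge:
  assumes "m_assignment {..j} m Lp" "1 \<le> m"
  shows "m * (m - 1) ^ j + (m - 1) ^ (j - 1) * list_changes Lp j
       \<le> (\<Sum>a\<in>Lp 0. \<Sum>b\<in>Lp j. path_count Lp j a b)"
  using assms(1)
proof (induction j)
  case 0
  then show ?case by (simp add: m_assignment_def list_changes_def)
next
  case (Suc j)
  let ?S = "\<lambda>j. \<Sum>a\<in>Lp 0. \<Sum>b\<in>Lp j. path_count Lp j a b"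
  let ?D = "card (Lp j - Lp (Suc j))"
  have fin: "finite (Lp j)" using Suc.prems by (simp add: m_assignment_def)
  obtain q where q: "m = Suc q" using assms(2) by (cases m) auto
  have shift: "q ^ j * list_changes Lp j = q * (q ^ (j - 1) * list_changes Lp j)"
    by (cases j) (simp_all add: list_changes_def)
  have "m * (m - 1) ^ Suc j + (m - 1) ^ j * list_changes Lp (Suc j)
      = (m - 1) * (m * (m - 1) ^ j + (m - 1) ^ (j - 1) * list_changes Lp j) + ?D * (m - 1) ^ j"
    unfolding q diff_Suc_1 using shift by (simp add: list_changes_def algebra_simps)
  also have "\<dots> \<le> (m - 1) * ?S j + (\<Sum>c\<in>Lp j - Lp (Suc j). \<Sum>a\<in>Lp 0. path_count Lp j a c)"
    using Suc.IH[OF m_assignment_atMost_Suc[OF Suc.prems]] fin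
      sum_bounded_below[of "Lp j - Lp (Suc j)" "(m - 1) ^ j"]
      path_count_column_sum_ge[OF m_assignment_atMost_Suc[OF Suc.prems]]
    by (intro add_mono mult_left_mono) auto
  also have "\<dots> = ?S (Suc j)"
    using sum_path_count_Suc[OF Suc.prems assms(2)] by simp
  finally show ?case by simp
qed

section \<open>Weighted lower bounds for path counts\<close>

lemma ex_bij_betw_fixing_Int:
  assumes "finite B" "finite C" "card B = card C"
  obtains s where "bij_betw s B C" "\<And>x. x \<in> B \<inter> C \<Longrightarrow> s x = x"
proof -
  have "card (B - C) = card (C - B)"
    using assms by (simp add: card_Diff_subset_Int Int_commute)
  then obtain g where g: "bij_betw g (B - C) (C - B)"
    using assms finite_same_card_bij by (metis finite_Diff)
  have "bij_betw (\<lambda>x. if x \<in> B \<inter> C then id x else g x) (B \<inter> C \<union> (B - C)) (B \<inter> C \<union> (C - B))"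
    by (rule bij_betw_disjoint_Un[OF bij_betw_id g]) auto
  moreover have "B \<inter> C \<union> (B - C) = B" "B \<inter> C \<union> (C - B) = C" by auto
  ultimately have "bij_betw (\<lambda>x. if x \<in> B \<inter> C then id x else g x) B C" by simp
  then show thesis by (rule that) simp
qed

lemma path_count_lower_Suc:
  assumes m: "2 \<le> m" and Lj: "finite (Lp j)" "card (Lp j) = m"
    and c0: "c0 \<in> Lp j" and c1: "b \<in> Lp j \<Longrightarrow> b = c1 \<longleftrightarrow> b = c0"
    and lower: "\<And>c. c \<in> Lp j \<Longrightarrow>
      walks_ne m j + (-1) ^ j * (if c = c0 then 1 else 0) \<le> int (path_count Lp j a c)"
    and b: "b \<in> Lp (Suc j)"
  shows "walks_ne m (Suc j) + (-1) ^ Suc j * (if b = c1 then 1 else 0) \<le> int (path_count Lp (Suc j) a b)"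
proof -
  have "int (card (Lp j - {b})) * walks_ne m j + (-1) ^ j * (if c0 = b then 0 else 1)
      = (\<Sum>c\<in>Lp j - {b}. walks_ne m j + (-1) ^ j * (if c = c0 then 1 else 0))"
    using Lj c0 by (simp add: sum.distrib sum_distrib_left[symmetric])
  also have "\<dots> \<le> int (path_count Lp (Suc j) a b)"
    using lower b by (auto intro: sum_mono)
  finally have step: "int (card (Lp j - {b})) * walks_ne m j + (-1) ^ j * (if c0 = b then 0 else 1)
      \<le> int (path_count Lp (Suc j) a b)" .
  show ?thesis
  proof (cases "b \<in> Lp j")
    case True
    then have "int (card (Lp j - {b})) = int m - 1" using Lj m by (simp add: of_nat_diff)
    then have "(int m - 1) * walks_ne m j + (-1) ^ j * (if c0 = b then 0 else 1)
        \<le> int (path_count Lp (Suc j) a b)"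
      using step by (simp only:)
    then show ?thesis using c1[OF True] by (cases "b = c0") (simp_all del: path_count.simps)
  next
    case False
    then have "int (card (Lp j - {b})) = int m" and "c0 \<noteq> b" using Lj c0 by auto
    then have "int m * walks_ne m j + (-1) ^ j \<le> int (path_count Lp (Suc j) a b)"
      using step False c0 by (auto simp del: path_count.simps)
    moreover have "0 \<le> walks_ne m j + (-1) ^ j * (if b = c1 then 1 else 0)"
      using walks_ne_nonneg[OF m, of j] walks_ne_pos_odd[OF m, of j] by (cases "even j") auto
    ultimately show ?thesis by (simp add: algebra_simps)
  qed
qed

lemma path_count_transversal:
  assumes m: "2 \<le> m" and L: "m_assignment {..j} m Lp"
  shows "\<exists>t. bij_betw t (Lp 0) (Lp j) \<and> card {a \<in> Lp 0. t a \<noteq> a} \<le> list_changes Lp j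
    \<and> (\<forall>a\<in>Lp 0. \<forall>b\<in>Lp j.
          walks_ne m j + (-1) ^ j * (if b = t a then 1 else 0) \<le> int (path_count Lp j a b))"
  using L
proof (induction j)
  case 0
  show ?case by (rule exI[of _ id]) (simp add: list_changes_def bij_betw_def)
next
  case (Suc j)
  have L0: "finite (Lp 0)" and Lj: "finite (Lp j)" "card (Lp j) = m"
    and Ls: "finite (Lp (Suc j))" "card (Lp (Suc j)) = m"
    using Suc.prems by (auto simp: m_assignment_def)
  obtain t where t: "bij_betw t (Lp 0) (Lp j)"
    and moved: "card {a \<in> Lp 0. t a \<noteq> a} \<le> list_changes Lp j"
    and lower: "\<And>a b. a \<in> Lp 0 \<Longrightarrow> b \<in> Lp j \<Longrightarrow>
      walks_ne m j + (-1) ^ j * (if b = t a then 1 else 0) \<le> int (path_count Lp j a b)"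
    using Suc.IH[OF m_assignment_atMost_Suc[OF Suc.prems]] by blast
  obtain s where s: "bij_betw s (Lp j) (Lp (Suc j))"
    and s_fix: "\<And>x. x \<in> Lp j \<inter> Lp (Suc j) \<Longrightarrow> s x = x"
    using ex_bij_betw_fixing_Int[OF Lj(1) Ls(1)] Lj Ls by metis
  have t_into: "a \<in> Lp 0 \<Longrightarrow> t a \<in> Lp j" for a using t by (auto simp: bij_betw_def)
  have "bij_betw t {a \<in> Lp 0. t a \<notin> Lp (Suc j)} (Lp j - Lp (Suc j))"
    by (rule bij_betw_subset[OF t]) (use t in \<open>auto simp: bij_betw_def\<close>)
  then have "card {a \<in> Lp 0. t a \<notin> Lp (Suc j)} = card (Lp j - Lp (Suc j))"
    by (rule bij_betw_same_card)
  moreover have "{a \<in> Lp 0. s (t a) \<noteq> a} \<subseteq> {a \<in> Lp 0. t a \<noteq> a} \<union> {a \<in> Lp 0. t a \<notin> Lp (Suc j)}"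
  proof (intro subsetI)
    fix a assume "a \<in> {a \<in> Lp 0. s (t a) \<noteq> a}"
    then show "a \<in> {a \<in> Lp 0. t a \<noteq> a} \<union> {a \<in> Lp 0. t a \<notin> Lp (Suc j)}"
      using s_fix[of "t a"] t_into[of a] by auto
  qed
  then have "card {a \<in> Lp 0. s (t a) \<noteq> a} \<le> card {a \<in> Lp 0. t a \<noteq> a} + card {a \<in> Lp 0. t a \<notin> Lp (Suc j)}"
    using L0 by (intro le_trans[OF card_mono card_Un_le]) auto
  ultimately have moved': "card {a \<in> Lp 0. (s \<circ> t) a \<noteq> a} \<le> list_changes Lp (Suc j)"
    using moved by (simp add: list_changes_def)
  have "walks_ne m (Suc j) + (-1) ^ Suc j * (if b = s (t a) then 1 else 0) \<le> int (path_count Lp (Suc j) a b)"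
    if a: "a \<in> Lp 0" and b: "b \<in> Lp (Suc j)" for a b
  proof (rule path_count_lower_Suc[OF m Lj t_into[OF a] _ lower[OF a] b])
    assume "b \<in> Lp j"
    then show "b = s (t a) \<longleftrightarrow> b = t a"
      using s s_fix[of b] t_into[OF a] b by (auto simp: bij_betw_def inj_on_def)
  qed
  then show ?case using bij_betw_trans[OF t s] moved'
    by (intro exI[of _ "s \<circ> t"] conjI ballI) (simp_all add: comp_def del: path_count.simps)
qed

lemma sum_weighted_ge_of_lower:
  fixes W N :: "'a \<Rightarrow> 'b \<Rightarrow> int"
  assumes B: "finite B" and t: "\<And>a. a \<in> A \<Longrightarrow> t a \<in> B"
    and N: "\<And>a b. a \<in> A \<Longrightarrow> b \<in> B \<Longrightarrow> d + (if b = t a then 1 else 0) \<le> N a b"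
    and W: "\<And>a b. a \<in> A \<Longrightarrow> b \<in> B \<Longrightarrow> w \<le> W a b"
  shows "d * (\<Sum>a\<in>A. \<Sum>b\<in>B. W a b) + (\<Sum>a\<in>A. W a (t a))
      + w * ((\<Sum>a\<in>A. \<Sum>b\<in>B. N a b) - int (card A) * (int (card B) * d + 1))
    \<le> (\<Sum>a\<in>A. \<Sum>b\<in>B. W a b * N a b)"
proof -
  define e where "e a b = d + (if b = t a then 1 else 0)" for a b
  have sum_e: "(\<Sum>a\<in>A. \<Sum>b\<in>B. e a b) = int (card A) * (int (card B) * d + 1)"
    using B t by (simp add: e_def sum.distrib)
  have sum_We: "(\<Sum>a\<in>A. \<Sum>b\<in>B. W a b * e a b) = d * (\<Sum>a\<in>A. \<Sum>b\<in>B. W a b) + (\<Sum>a\<in>A. W a (t a))"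
    using B t
    by (simp add: e_def algebra_simps sum.distrib sum_distrib_left if_distrib[of "(*) _"] sum.delta' cong: if_cong)
  have "W a b * e a b + w * (N a b - e a b) \<le> W a b * N a b" if "a \<in> A" "b \<in> B" for a b
  proof -
    have "w * (N a b - e a b) \<le> W a b * (N a b - e a b)"
      using N[OF that] W[OF that] by (intro mult_right_mono) (auto simp: e_def)
    then show ?thesis by (simp add: algebra_simps)
  qed
  then have "(\<Sum>a\<in>A. \<Sum>b\<in>B. W a b * e a b + w * (N a b - e a b)) \<le> (\<Sum>a\<in>A. \<Sum>b\<in>B. W a b * N a b)"
    by (intro sum_mono) auto
  then show ?thesis
    unfolding sum_e[symmetric] sum_We[symmetric]
    by (simp add: right_diff_distrib sum_subtractf sum_distrib_left sum.distrib)
qed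

(* The excess of the total path count over m (m-1)^n, weighted by w, pays for the colours moved
   by the bijection of path_count_transversal, each of which costs at most D - w. *)
lemma weighted_path_count_ge:
  fixes W :: "nat \<Rightarrow> nat \<Rightarrow> int"
  assumes m: "2 \<le> m" and L: "m_assignment {..n} m Lp" and n: "even n"
    and W_ge: "\<And>a b. a \<in> Lp 0 \<Longrightarrow> b \<in> Lp n \<Longrightarrow> w \<le> W a b"
    and W_diag: "\<And>a. a \<in> Lp 0 \<Longrightarrow> a \<in> Lp n \<Longrightarrow> D \<le> W a a"
    and w: "0 \<le> w" "w \<le> D" and gap: "D - w \<le> w * (int m - 1) ^ (n - 1)"
  shows "walks_ne m n * (\<Sum>a\<in>Lp 0. \<Sum>b\<in>Lp n. W a b) + int m * D
       \<le> (\<Sum>a\<in>Lp 0. \<Sum>b\<in>Lp n. W a b * int (path_count Lp n a b))"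
proof -
  have L0: "finite (Lp 0)" "card (Lp 0) = m" and Ln: "finite (Lp n)" "card (Lp n) = m"
    using L by (auto simp: m_assignment_def)
  obtain t where t: "bij_betw t (Lp 0) (Lp n)" and moved: "card {a \<in> Lp 0. t a \<noteq> a} \<le> list_changes Lp n"
    and lower: "\<And>a b. a \<in> Lp 0 \<Longrightarrow> b \<in> Lp n \<Longrightarrow>
      walks_ne m n + (if b = t a then 1 else 0) \<le> int (path_count Lp n a b)"
    using path_count_transversal[OF m L] n by auto
  have t_into: "a \<in> Lp 0 \<Longrightarrow> t a \<in> Lp n" for a using t by (auto simp: bij_betw_def)
  define X where "X = card {a \<in> Lp 0. t a \<noteq> a}"
  define S where "S = (\<Sum>a\<in>Lp 0. \<Sum>b\<in>Lp n. int (path_count Lp n a b))"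
  have "walks_ne m n * (\<Sum>a\<in>Lp 0. \<Sum>b\<in>Lp n. W a b) + (\<Sum>a\<in>Lp 0. W a (t a))
      + w * (S - int m * (int m - 1) ^ n)
    \<le> (\<Sum>a\<in>Lp 0. \<Sum>b\<in>Lp n. W a b * int (path_count Lp n a b))"
    using sum_weighted_ge_of_lower[where A = "Lp 0" and N = "\<lambda>a b. int (path_count Lp n a b)",
        OF Ln(1) t_into lower W_ge] walks_ne_closed_form[of m n] L0 Ln n
    by (simp add: S_def)
  moreover have "int m * D - (D - w) * int X \<le> (\<Sum>a\<in>Lp 0. W a (t a))"
  proof -
    have "D - (D - w) * (if t a \<noteq> a then 1 else 0) \<le> W a (t a)" if a: "a \<in> Lp 0" for a
    proof (cases "t a = a")
      case True
      then show ?thesis using W_diag[OF a] t_into[OF a] by simp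
    next
      case False
      then show ?thesis using W_ge[OF a t_into[OF a]] by simp
    qed
    then have "(\<Sum>a\<in>Lp 0. D - (D - w) * (if t a \<noteq> a then 1 else 0)) \<le> (\<Sum>a\<in>Lp 0. W a (t a))"
      by (rule sum_mono)
    moreover have "(\<Sum>a\<in>Lp 0. D - (D - w) * (if t a \<noteq> a then 1 else 0)) = int m * D - (D - w) * int X"
      using L0 by (simp add: X_def sum_subtractf sum_distrib_left[symmetric] sum.inter_filter[symmetric])
    ultimately show ?thesis by simp
  qed
  moreover have "(D - w) * int X \<le> w * (S - int m * (int m - 1) ^ n)"
  proof -
    have "int (m * (m - 1) ^ n + (m - 1) ^ (n - 1) * list_changes Lp n) \<le> S"
      unfolding S_def of_nat_sum[symmetric] of_nat_le_iff using m by (intro sum_path_count_ge[OF L]) simp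
    then have "(int m - 1) ^ (n - 1) * int (list_changes Lp n) \<le> S - int m * (int m - 1) ^ n"
      using m by (simp add: of_nat_diff)
    then have "w * ((int m - 1) ^ (n - 1) * int (list_changes Lp n)) \<le> w * (S - int m * (int m - 1) ^ n)"
      using w(1) by (rule mult_left_mono)
    moreover have "(D - w) * int X \<le> (D - w) * int (list_changes Lp n)"
      using moved w by (intro mult_left_mono) (auto simp: X_def)
    moreover have "(D - w) * int (list_changes Lp n) \<le> w * (int m - 1) ^ (n - 1) * int (list_changes Lp n)"
      using gap by (intro mult_right_mono) auto
    ultimately show ?thesis by (simp add: algebra_simps)
  qed
  ultimately show ?thesis by linarith
qed

lemma card_le_card_Diff_pair:
  assumes "finite S"
  shows "card S \<le> card (S - {a, b}) + 2"
proof -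
  have "card S \<le> card (S - {a, b} \<union> {a, b})" using assms by (intro card_mono) auto
  also have "\<dots> \<le> card (S - {a, b}) + card {a, b}" by (rule card_Un_le)
  also have "card {a, b} \<le> 2" by (cases "a = b") auto
  finally show ?thesis by simp
qed

lemma card_Diff_pair_product_ge:
  assumes "finite S" "card S = m" "finite T" "card T = m" "2 \<le> m"
  shows "(int m - 2) ^ 2 \<le> int (card (S - {a, b}) * card (T - {a, b}))"
    and "(int m - 1) ^ 2 \<le> int (card (S - {a}) * card (T - {a}))"
proof -
  have "int m - 2 \<le> int (card (S - {a, b}))" "int m - 2 \<le> int (card (T - {a, b}))"
    using card_le_card_Diff_pair[of S a b] card_le_card_Diff_pair[of T a b] assms by linarith+
  then show "(int m - 2) ^ 2 \<le> int (card (S - {a, b}) * card (T - {a, b}))"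
    using assms(5) by (simp add: power2_eq_square mult_mono)
  have "int m - 1 \<le> int (card (S - {a}))" "int m - 1 \<le> int (card (T - {a}))"
    using assms by (simp_all add: card_Diff_singleton_if)
  then show "(int m - 1) ^ 2 \<le> int (card (S - {a}) * card (T - {a}))"
    using assms(5) by (simp add: power2_eq_square mult_mono)
qed

lemma m_assignment_three_lists:
  assumes "finite A" "card A = m" "finite B" "card B = m" "finite C" "card C = m"
  shows "m_assignment {..2} m ((!) [A, B, C])"
  using assms by (auto simp: m_assignment_def numeral_2_eq_2 le_Suc_eq)

(* (m - 1)^4 + (m - 1) is the chromatic polynomial of the 4-cycle; the sum counts the list
   colourings of the 4-cycle with lists L0, La, Lw, Lb, read as a weighted count of the path
   L0, La, Lw. *)
lemma four_cycle_count_ge: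
  fixes L0 La Lb Lw :: "nat set"
  assumes m: "3 \<le> m"
    and L: "finite L0" "card L0 = m" "finite La" "card La = m"
      "finite Lb" "card Lb = m" "finite Lw" "card Lw = m"
  shows "(int m - 1) ^ 4 + (int m - 1) \<le> (\<Sum>a\<in>L0. \<Sum>b\<in>Lw. int (card (La - {a, b}) * card (Lb - {a, b})))"
proof -
  let ?W = "\<lambda>a b. int (card (Lb - {a, b}))"
  have La_path: "m_assignment {..2} m ((!) [L0, La, Lw])"
    and Lb_path: "m_assignment {..2} m ((!) [L0, Lb, Lw])"
    using L by (simp_all add: m_assignment_three_lists)
  have La_count: "path_count ((!) [L0, La, Lw]) 2 a b = card (La - {a, b})"
    and Lb_count: "path_count ((!) [L0, Lb, Lw]) 2 a b = card (Lb - {a, b})"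
    if "a \<in> L0" "b \<in> Lw" for a b
    using path_count_two[of a "(!) [L0, La, Lw]" b] path_count_two[of a "(!) [L0, Lb, Lw]" b] that L
    by (simp_all add: numeral_2_eq_2)
  have "m * (m - 1) ^ 2 \<le> (\<Sum>a\<in>L0. \<Sum>b\<in>Lw. card (Lb - {a, b}))"
    using sum_path_count_ge[OF Lb_path] Lb_count m by simp
  then have "int (m * (m - 1) ^ 2) \<le> int (\<Sum>a\<in>L0. \<Sum>b\<in>Lw. card (Lb - {a, b}))"
    by (simp only: of_nat_le_iff)
  then have sum_W: "int m * (int m - 1) ^ 2 \<le> (\<Sum>a\<in>L0. \<Sum>b\<in>Lw. ?W a b)"
    using m by (simp add: of_nat_diff)
  have "(int m - 1) ^ 4 + (int m - 1) = (int m - 2) * (int m * (int m - 1) ^ 2) + int m * (int m - 1)"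
    by algebra
  also have "\<dots> \<le> walks_ne m 2 * (\<Sum>a\<in>L0. \<Sum>b\<in>Lw. ?W a b) + int m * (int m - 1)"
    using sum_W m by (simp add: numeral_2_eq_2 mult_left_mono)
  also have "\<dots> \<le> (\<Sum>a\<in>L0. \<Sum>b\<in>Lw. ?W a b * int (path_count ((!) [L0, La, Lw]) 2 a b))"
  proof (rule weighted_path_count_ge[OF _ La_path, simplified])
    show "int m - 2 \<le> ?W a b" for a b using card_le_card_Diff_pair[of Lb a b] L by linarith
    show "int m - 1 \<le> ?W a a" for a using L m by (simp add: card_Diff_singleton_if of_nat_diff)
    show "int m - 1 - (int m - 2) \<le> (int m - 2) * (int m - 1)"
      using mult_mono[of 1 "int m - 2" 1 "int m - 1"] m by simp
  qed (use m in auto)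
  also have "\<dots> = (\<Sum>a\<in>L0. \<Sum>b\<in>Lw. int (card (La - {a, b}) * card (Lb - {a, b})))"
    using La_count by (intro sum.cong refl) simp
  finally show ?thesis .
qed

lemma theta22_path_sum_ge:
  fixes La Lb :: "nat set"
  assumes m: "3 \<le> m" and L: "m_assignment {..n} m Lp" and n: "even n" "4 \<le> n"
    and La: "finite La" "card La = m" and Lb: "finite Lb" "card Lb = m"
  shows "walks_ne m n * ((int m - 1) ^ 4 + (int m - 1)) + int m * (int m - 1) ^ 2
    \<le> (\<Sum>a\<in>Lp 0. \<Sum>b\<in>Lp n. int (card (La - {a, b}) * card (Lb - {a, b})) * int (path_count Lp n a b))"
proof -
  let ?A = "\<lambda>a b. int (card (La - {a, b}) * card (Lb - {a, b}))"
  have gap: "(int m - 1) ^ 2 - (int m - 2) ^ 2 \<le> (int m - 2) ^ 2 * (int m - 1) ^ (n - 1)"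
  proof -
    have "(int m - 1) ^ 2 - (int m - 2) ^ 2 \<le> (int m - 1) ^ 2" by simp
    also have "\<dots> \<le> (int m - 1) ^ (n - 1)" using m n by (intro power_increasing) auto
    also have "\<dots> \<le> (int m - 2) ^ 2 * (int m - 1) ^ (n - 1)"
      using mult_right_mono[of 1 "(int m - 2) ^ 2" "(int m - 1) ^ (n - 1)"] m
      by (simp add: power_mono[of 1 "int m - 2" 2, simplified])
    finally show ?thesis .
  qed
  have L0: "finite (Lp 0)" "card (Lp 0) = m" and Ln: "finite (Lp n)" "card (Lp n) = m"
    using L by (auto simp: m_assignment_def)
  have "walks_ne m n * ((int m - 1) ^ 4 + (int m - 1)) + int m * (int m - 1) ^ 2
      \<le> walks_ne m n * (\<Sum>a\<in>Lp 0. \<Sum>b\<in>Lp n. ?A a b) + int m * (int m - 1) ^ 2"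
    using four_cycle_count_ge[OF m L0 La Lb Ln] walks_ne_nonneg[of m n] m by (simp add: mult_left_mono)
  also have "\<dots> \<le> (\<Sum>a\<in>Lp 0. \<Sum>b\<in>Lp n. ?A a b * int (path_count Lp n a b))"
    using card_Diff_pair_product_ge[OF La Lb] m by (intro weighted_path_count_ge[OF _ L n(1) _ _ _ _ gap]) auto
  finally show ?thesis .
qed

section \<open>The graph \<Theta>(2,2,n)\<close>

lemma Setcompr_less_2: "{f j |j. j < (2::nat)} = {f 0, f 1}"
  by (auto dest: less_2_cases)

lemma finite_theta_V: "finite (theta_V l1 l2 l3)"
proof (rule finite_subset)
  show "theta_V l1 l2 l3 \<subseteq> {0..3} \<times> {0..1 + l1 + l2 + l3}" by (auto simp: theta_V_def)
qed simp

lemma theta_V_2_2: "theta_V 2 2 n = {(0, 0), (0, 1), (1, 1), (2, 1)} \<union> {(3, j) |j. 1 \<le> j \<and> j < n}"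
  by (auto simp: theta_V_def)

lemma theta_E_2_2:
  "theta_E 2 2 n = {{(0, 0), (1, 1)}, {(1, 1), (0, 1)}, {(0, 0), (2, 1)}, {(2, 1), (0, 1)}}
     \<union> {{theta_path_vertex n 3 j, theta_path_vertex n 3 (Suc j)} |j. j < n}"
proof -
  have short_path: "{{theta_path_vertex 2 i j, theta_path_vertex 2 i (Suc j)} |j. j < 2}
      = {{(0, 0), (i, 1)}, {(i, 1), (0, 1)}}" for i :: nat
    unfolding Setcompr_less_2 by (simp add: theta_path_vertex_def insert_commute)
  show ?thesis unfolding theta_E_def by (simp add: short_path Un_assoc insert_commute)
qed

definition theta_path_index :: "nat \<Rightarrow> nat \<times> nat \<Rightarrow> nat" where
  "theta_path_index n v = (if v = (0, 0) then 0 else if v = (0, 1) then n else snd v)"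

lemma theta_path_vertex_in_theta_V: "0 < n \<Longrightarrow> i \<le> n \<Longrightarrow> theta_path_vertex n 3 i \<in> theta_V 2 2 n"
  by (auto simp: theta_V_2_2 theta_path_vertex_def)

lemma theta_path_vertex_ne: "theta_path_vertex n 3 i \<noteq> (1, 1)" "theta_path_vertex n 3 i \<noteq> (2, 1)"
  by (auto simp: theta_path_vertex_def)

lemma theta_path_index_vertex: "0 < n \<Longrightarrow> i \<le> n \<Longrightarrow> theta_path_index n (theta_path_vertex n 3 i) = i"
  by (auto simp: theta_path_index_def theta_path_vertex_def)

lemma theta_V_2_2_cases:
  assumes "v \<in> theta_V 2 2 n" "0 < n"
  obtains "v = (1, 1)" | "v = (2, 1)"
    | "theta_path_index n v \<le> n" "theta_path_vertex n 3 (theta_path_index n v) = v"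
  using assms by (auto simp: theta_V_2_2 theta_path_index_def theta_path_vertex_def)

(* A colouring of \<Theta>(2,2,n) is split into the colours of the branch vertices, the colouring
   of the long path indexed by position, and the colours of the two middle vertices. *)
type_synonym theta22_data = "(nat \<times> nat) \<times> (nat \<Rightarrow> nat) \<times> nat \<times> nat"

definition theta22_split :: "nat \<Rightarrow> (nat \<times> nat \<Rightarrow> nat) \<Rightarrow> theta22_data" where
  "theta22_split n f = ((f (0, 0), f (0, 1)), (\<lambda>i\<in>{0..n}. f (theta_path_vertex n 3 i)), f (1, 1), f (2, 1))"

definition theta22_join :: "nat \<Rightarrow> theta22_data \<Rightarrow> nat \<times> nat \<Rightarrow> nat" where
  "theta22_join n = (\<lambda>(_, h, c, c'). \<lambda>v\<in>theta_V 2 2 n.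
     if v = (1, 1) then c else if v = (2, 1) then c' else h (theta_path_index n v))"

definition theta22_parts :: "nat \<Rightarrow> (nat \<times> nat \<Rightarrow> nat set) \<Rightarrow> theta22_data set" where
  "theta22_parts n L = (SIGMA (a, b) : L (0, 0) \<times> L (0, 1).
     path_colorings (\<lambda>i. L (theta_path_vertex n 3 i)) n a b \<times> (L (1, 1) - {a, b}) \<times> (L (2, 1) - {a, b}))"

lemma theta22_join_apply:
  assumes "0 < n"
  shows "i \<le> n \<Longrightarrow> theta22_join n (ab, h, c, c') (theta_path_vertex n 3 i) = h i"
    and "theta22_join n (ab, h, c, c') (1, 1) = c" "theta22_join n (ab, h, c, c') (2, 1) = c'"
  using assms theta_path_vertex_in_theta_V theta_path_vertex_ne theta_path_index_vertex
  by (simp_all add: theta22_join_def theta_V_2_2)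

lemma theta22_split_in_parts:
  assumes n: "0 < n" and f: "f \<in> list_colorings (theta_V 2 2 n) (theta_E 2 2 n) L"
  shows "theta22_split n f \<in> theta22_parts n L"
proof -
  have fL: "\<And>v. v \<in> theta_V 2 2 n \<Longrightarrow> f v \<in> L v"
    and fE: "\<And>u v. {u, v} \<in> theta_E 2 2 n \<Longrightarrow> f u \<noteq> f v"
    using f by (auto simp: list_colorings_def)
  have "(\<lambda>i\<in>{0..n}. f (theta_path_vertex n 3 i))
      \<in> path_colorings (\<lambda>i. L (theta_path_vertex n 3 i)) n (f (0, 0)) (f (0, 1))"
    using fL[OF theta_path_vertex_in_theta_V[OF n]] n
      fE[of "theta_path_vertex n 3 i" "theta_path_vertex n 3 (Suc i)" for i]
    by (auto simp: path_colorings_def theta_E_2_2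
        theta_path_vertex_def[of n 3 0] theta_path_vertex_def[of n 3 n])
  moreover have "f (1, 1) \<in> L (1, 1) - {f (0, 0), f (0, 1)}" "f (2, 1) \<in> L (2, 1) - {f (0, 0), f (0, 1)}"
    using fL fE by (auto simp: theta_V_2_2 theta_E_2_2 insert_commute)
  moreover have "f (0, 0) \<in> L (0, 0)" "f (0, 1) \<in> L (0, 1)" using fL by (auto simp: theta_V_2_2)
  ultimately show ?thesis by (simp add: theta22_split_def theta22_parts_def)
qed

lemma theta22_join_in_colorings:
  assumes n: "0 < n" and x: "x \<in> theta22_parts n L"
  shows "theta22_join n x \<in> list_colorings (theta_V 2 2 n) (theta_E 2 2 n) L"
proof -
  obtain a b h c c' where x_eq: "x = ((a, b), h, c, c')" by (metis prod.collapse)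
  let ?g = "theta22_join n x"
  have h: "h \<in> path_colorings (\<lambda>i. L (theta_path_vertex n 3 i)) n a b"
    and c: "c \<in> L (1, 1) - {a, b}" and c': "c' \<in> L (2, 1) - {a, b}"
    using x by (auto simp: theta22_parts_def x_eq)
  note g_path = theta22_join_apply(1)[OF n, of _ "(a, b)" h c c', folded x_eq]
  note g_mid = theta22_join_apply(2,3)[OF n, of "(a, b)" h c c', folded x_eq]
  have g_end: "?g (0, 0) = a" "?g (0, 1) = b"
    using g_path[of 0] g_path[of n] h n by (simp_all add: path_colorings_def theta_path_vertex_def)
  have "?g v \<in> L v" if "v \<in> theta_V 2 2 n" for v
    using that n
  proof (cases rule: theta_V_2_2_cases)
    case 3
    then have "h (theta_path_index n v) \<in> L v" using h by (auto simp: path_colorings_def)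
    then show ?thesis using g_path 3 by metis
  qed (use g_mid c c' in simp_all)
  moreover have "?g u \<noteq> ?g v" if "{u, v} \<in> theta_E 2 2 n" for u v
    using that h c c' g_path g_end g_mid
    by (auto simp: theta_E_2_2 doubleton_eq_iff path_colorings_def)
  ultimately show ?thesis by (auto simp: list_colorings_def theta22_join_def x_eq)
qed

lemma theta22_join_split:
  assumes n: "0 < n" and f: "f \<in> extensional (theta_V 2 2 n)"
  shows "theta22_join n (theta22_split n f) = f"
proof (rule ext)
  fix v
  show "theta22_join n (theta22_split n f) v = f v"
  proof (cases "v \<in> theta_V 2 2 n")
    case False
    then show ?thesis using extensional_arb[OF f False] by (simp add: theta22_join_def theta22_split_def)
  next
    case True
    then have join: "theta22_join n (theta22_split n f) v
      = (if v = (1, 1) then f (1, 1) else if v = (2, 1) then f (2, 1)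
         else if theta_path_index n v \<in> {0..n} then f (theta_path_vertex n 3 (theta_path_index n v))
         else undefined)"
      by (simp add: theta22_join_def theta22_split_def)
    from True n show ?thesis
      unfolding join by (cases rule: theta_V_2_2_cases) auto
  qed
qed

lemma theta22_split_join:
  assumes n: "0 < n" and x: "x \<in> theta22_parts n L"
  shows "theta22_split n (theta22_join n x) = x"
proof -
  obtain a b h c c' where x_eq: "x = ((a, b), h, c, c')" by (metis prod.collapse)
  have h: "h \<in> path_colorings (\<lambda>i. L (theta_path_vertex n 3 i)) n a b"
    using x by (auto simp: theta22_parts_def x_eq)
  note g_path = theta22_join_apply(1)[OF n, of _ "(a, b)" h c c', folded x_eq]
  have "(\<lambda>i\<in>{0..n}. theta22_join n x (theta_path_vertex n 3 i)) = h"
    using g_path h by (auto simp: path_colorings_def extensional_def)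
  moreover have "theta22_join n x (0, 0) = a" "theta22_join n x (0, 1) = b"
    using g_path[of 0] g_path[of n] h n by (simp_all add: path_colorings_def theta_path_vertex_def)
  ultimately show ?thesis by (simp add: theta22_split_def theta22_join_def x_eq theta_V_2_2)
qed

lemma bij_betw_theta22_split:
  assumes "0 < n"
  shows "bij_betw (theta22_split n) (list_colorings (theta_V 2 2 n) (theta_E 2 2 n) L) (theta22_parts n L)"
proof (rule bij_betw_byWitness[where f' = "theta22_join n"])
  show "\<forall>f\<in>list_colorings (theta_V 2 2 n) (theta_E 2 2 n) L. theta22_join n (theta22_split n f) = f"
    using assms by (simp add: list_colorings_def theta22_join_split)
qed (use assms theta22_split_join theta22_split_in_parts theta22_join_in_colorings in auto)

lemma P_list_theta22:
  assumes n: "0 < n" and L: "\<forall>v\<in>theta_V 2 2 n. finite (L v)"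
  shows "P_list (theta_V 2 2 n) (theta_E 2 2 n) L
    = (\<Sum>a\<in>L (0, 0). \<Sum>b\<in>L (0, 1). card (L (1, 1) - {a, b}) * card (L (2, 1) - {a, b})
         * path_count (\<lambda>i. L (theta_path_vertex n 3 i)) n a b)"
proof -
  have fin: "finite (L (0, 0))" "finite (L (0, 1))" "finite (L (1, 1))" "finite (L (2, 1))"
    using L by (auto simp: theta_V_2_2)
  have fin_path: "\<And>i. i \<le> n \<Longrightarrow> finite (L (theta_path_vertex n 3 i))"
    using L theta_path_vertex_in_theta_V[OF n] by blast
  have "P_list (theta_V 2 2 n) (theta_E 2 2 n) L = card (theta22_parts n L)"
    unfolding P_list_def using bij_betw_theta22_split[OF n] by (rule bij_betw_same_card)
  also have "\<dots> = (\<Sum>(a, b)\<in>L (0, 0) \<times> L (0, 1). card (path_colorings (\<lambda>i. L (theta_path_vertex n 3 i)) n a b)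
      * (card (L (1, 1) - {a, b}) * card (L (2, 1) - {a, b})))"
    unfolding theta22_parts_def using fin fin_path
    by (subst card_SigmaI) (auto simp: card_cartesian_product finite_path_colorings intro!: sum.cong)
  also have "\<dots> = (\<Sum>a\<in>L (0, 0). \<Sum>b\<in>L (0, 1). card (L (1, 1) - {a, b}) * card (L (2, 1) - {a, b})
         * path_count (\<lambda>i. L (theta_path_vertex n 3 i)) n a b)"
    by (simp add: sum.cartesian_product card_path_colorings[OF fin_path] algebra_simps)
  finally show ?thesis .
qed

lemma sum_sum_if_eq:
  fixes x y :: int
  assumes "finite S"
  shows "(\<Sum>a\<in>S. \<Sum>b\<in>S. if a = b then x else y) = int (card S) * x + int (card S) * (int (card S) - 1) * y"
proof -
  have "(\<Sum>b\<in>S. if a = b then x else y) = x + (int (card S) - 1) * y" if a: "a \<in> S" for a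
  proof -
    have "0 < card S" using assms a by (auto simp: card_gt_0_iff)
    then have card: "int (card (S - {a})) = int (card S) - 1" using assms a by (simp add: of_nat_diff)
    have "(\<Sum>b\<in>S. if a = b then x else y) = x + (\<Sum>b\<in>S - {a}. if a = b then x else y)"
      using assms a by (simp add: sum.remove)
    also have "(\<Sum>b\<in>S - {a}. if a = b then x else y) = (\<Sum>b\<in>S - {a}. y)"
      by (rule sum.cong) auto
    finally show ?thesis using card by simp
  qed
  then have "(\<Sum>a\<in>S. \<Sum>b\<in>S. if a = b then x else y) = (\<Sum>a\<in>S. x + (int (card S) - 1) * y)"
    by (rule sum.cong[OF refl])
  then show ?thesis by (simp add: algebra_simps)
qed

lemma chrom_theta22:
  assumes n: "0 < n" and m: "2 \<le> m"
  shows "int (chrom (theta_V 2 2 n) (theta_E 2 2 n) m)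
    = walks_ne m n * ((int m - 1) ^ 4 + (int m - 1)) + (-1) ^ n * (int m * (int m - 1) ^ 2)"
proof -
  let ?S = "{1..m}"
  have S: "finite ?S" "card ?S = m" by simp_all
  have summand: "int (card (?S - {a, b}) * card (?S - {a, b}) * path_count (\<lambda>_. ?S) n a b)
      = (if a = b then (int m - 1) ^ 2 * (walks_ne m n + (-1) ^ n) else (int m - 2) ^ 2 * walks_ne m n)"
    if ab: "a \<in> ?S" "b \<in> ?S" for a b
  proof -
    have "int (card (?S - {a, b})) = (if a = b then int m - 1 else int m - 2)"
      using ab m by (auto simp: card_Diff_subset of_nat_diff)
    then show ?thesis using path_count_const[OF S ab, of n] by (simp add: power2_eq_square)
  qed
  have "int (chrom (theta_V 2 2 n) (theta_E 2 2 n) m)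
      = (\<Sum>a\<in>?S. \<Sum>b\<in>?S. int (card (?S - {a, b}) * card (?S - {a, b}) * path_count (\<lambda>_. ?S) n a b))"
    unfolding chrom_def by (simp add: P_list_theta22[OF n])
  also have "\<dots> = (\<Sum>a\<in>?S. \<Sum>b\<in>?S. if a = b then (int m - 1) ^ 2 * (walks_ne m n + (-1) ^ n)
      else (int m - 2) ^ 2 * walks_ne m n)"
    using summand by (intro sum.cong refl) simp
  also have "\<dots> = walks_ne m n * ((int m - 1) ^ 4 + (int m - 1)) + (-1) ^ n * (int m * (int m - 1) ^ 2)"
    unfolding sum_sum_if_eq[OF S(1)] S(2) by algebra
  finally show ?thesis .
qed

lemma P_list_theta22_ge:
  assumes m: "3 \<le> m" and n: "even n" "4 \<le> n" and L: "m_assignment (theta_V 2 2 n) m L"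
  shows "walks_ne m n * ((int m - 1) ^ 4 + (int m - 1)) + int m * (int m - 1) ^ 2
    \<le> int (P_list (theta_V 2 2 n) (theta_E 2 2 n) L)"
proof -
  let ?Lp = "\<lambda>i. L (theta_path_vertex n 3 i)"
  have n0: "0 < n" using n by simp
  have "m_assignment {..n} m ?Lp"
    using L theta_path_vertex_in_theta_V[OF n0] by (simp add: m_assignment_def)
  moreover have "finite (L (1, 1))" "card (L (1, 1)) = m" "finite (L (2, 1))" "card (L (2, 1)) = m"
    using L by (auto simp: m_assignment_def theta_V_2_2)
  ultimately have "walks_ne m n * ((int m - 1) ^ 4 + (int m - 1)) + int m * (int m - 1) ^ 2
    \<le> (\<Sum>a\<in>?Lp 0. \<Sum>b\<in>?Lp n. int (card (L (1, 1) - {a, b}) * card (L (2, 1) - {a, b}))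
        * int (path_count ?Lp n a b))"
    by (rule theta22_path_sum_ge[OF m _ n])
  also have "\<dots> = int (P_list (theta_V 2 2 n) (theta_E 2 2 n) L)"
    using P_list_theta22[OF n0] L n0 by (simp add: m_assignment_def theta_path_vertex_def)
  finally show ?thesis .
qed

lemma P_list_le_power:
  assumes V: "finite V" and L: "m_assignment V m L"
  shows "P_list V E L \<le> m ^ card V"
proof -
  have "list_colorings V E L \<subseteq> PiE V L" by (auto simp: list_colorings_def PiE_def)
  moreover have "finite (PiE V L)" using V L by (intro finite_PiE) (auto simp: m_assignment_def)
  ultimately have "P_list V E L \<le> card (PiE V L)" unfolding P_list_def by (rule card_mono[rotated])
  also have "\<dots> = (\<Prod>v\<in>V. card (L v))" using V by (rule card_PiE)
  also have "\<dots> = m ^ card V" using L by (simp add: m_assignment_def)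
  finally show ?thesis .
qed

lemma list_color_fun_eqI:
  assumes V: "finite V" and lower: "\<And>L. m_assignment V m L \<Longrightarrow> chrom V E m \<le> P_list V E L"
  shows "list_color_fun V E m = chrom V E m"
  unfolding list_color_fun_def
proof (rule Min_eqI)
  have "{P_list V E L |L. m_assignment V m L} \<subseteq> {..m ^ card V}"
    using P_list_le_power[OF V] by blast
  then show "finite {P_list V E L |L. m_assignment V m L}"
    by (rule finite_subset) simp
  show "chrom V E m \<in> {P_list V E L |L. m_assignment V m L}"
    unfolding chrom_def by (intro CollectI exI[of _ "\<lambda>_. {1..m}"]) (simp add: m_assignment_def)
qed (use lower in blast)

theorem theorem11:
  fixes k m :: nat
  assumes "k \<ge> 2" and "m \<ge> 3"
  shows "list_color_fun (theta_V 2 2 (2*k)) (theta_E 2 2 (2*k)) m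
         = chrom (theta_V 2 2 (2*k)) (theta_E 2 2 (2*k)) m"
proof (rule list_color_fun_eqI[OF finite_theta_V])
  fix L assume L: "m_assignment (theta_V 2 2 (2 * k)) m L"
  have n: "even (2 * k)" "4 \<le> 2 * k" using assms(1) by auto
  have "int (chrom (theta_V 2 2 (2 * k)) (theta_E 2 2 (2 * k)) m)
      \<le> int (P_list (theta_V 2 2 (2 * k)) (theta_E 2 2 (2 * k)) L)"
    using chrom_theta22[of "2 * k" m] P_list_theta22_ge[OF assms(2) n L] assms by simp
  then show "chrom (theta_V 2 2 (2 * k)) (theta_E 2 2 (2 * k)) m
      \<le> P_list (theta_V 2 2 (2 * k)) (theta_E 2 2 (2 * k)) L"
    by simp
qed

end
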